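(* Let $G$ be a finite connected graph (loops and multiple edges allowed) with a cut vertex $v$, and let $G=H_1\vee H_2$ be a decomposition associated to $v$, i.e. $H_1,H_2$ are connected subgraphs of $G$ with $V(H_1)\cap V(H_2)=\{v\}$, $E(H_1)\cap E(H_2)=\emptyset$ and $H_1\cup H_2=G$. For $D_j\in\operatorname{Div}(H_j)$ ($j=1,2$) define $D_1+D_2\in\operatorname{Div}(G)$ by $(D_1+D_2)(v)=D_1(v)+D_2(v)$, $(D_1+D_2)(u)=D_1(u)$ for $u\in V(H_1)\setminus\{v\}$ and $(D_1+D_2)(u)=D_2(u)$ for $u\in V(H_2)\setminus\{v\}$. Then: (1) The map $\operatorname{Div}(H_1)\oplus\operatorname{Div}(H_2)\to\operatorname{Div}(G)$, $(D_1,D_2)\mapsto D_1+D_2$, is a surjective homomorphism with kernel isomorphic to $\mathbb{Z}$; it induces an isomorphism $\operatorname{Prin}(H_1)\oplus\operatorname{Prin}(H_2)\cong\operatorname{Prin}(G)$ and an exact sequence $0\to\mathbb{Z}\to\operatorname{Jac}(H_1)\oplus\operatorname{Jac}(H_2)\to\operatorname{Jac}(G)\to 0$. (2) For $j=1,2$, the extension-by-zero map $\operatorname{Div}(H_j)\to\operatorname{Div}(G)$ is injective, maps $\operatorname{Prin}(H_j)$ injectively into $\operatorname{Prin}(G)$, and induces an injective map $\operatorname{Jac}(H_j)\to\operatorname{Jac}(G)$, so that the diagram formed by the exact sequences $0\to\operatorname{Prin}\to\operatorname{Div}\to\operatorname{Jac}\to0$ for $H_j$ and for $G$ commutes with injective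 vertical arrows. (3) For all $D_1\in\operatorname{Div}(H_1)$, $D_2\in\operatorname{Div}(H_2)$ we have $r_G(D_1+D_2)\ge\min\{r_{H_1}(D_1),r_{H_2}(D_2)\}$. (4) For $j=1,2$ and every $D_j\in\operatorname{Div}(H_j)$ (viewed in $\operatorname{Div}(G)$ by extension by zero) we have $r_{H_j}(D_j)\ge r_G(D_j)$.
   Context: Graphs are finite and connected, loops and multiple edges allowed. For a graph $G$, $\operatorname{Div}(G)$ is the free abelian group on $V(G)$; write $D=\sum_v D(v)v$, $\deg D=\sum_v D(v)$, and $D\ge0$ (effective) if all $D(v)\ge0$. Define $(v\cdot w)$ as the number of edges joining $v$ and $w$ if $v\ne w$, and $(v\cdot v)=-\operatorname{val}(v)+2\operatorname{loop}(v)$, where $\operatorname{val}(v)$ is the valency (a loop counts twice) and $\operatorname{loop}(v)$ the number of loops at $v$. Set $T_v=\sum_{w\in V(G)}(v\cdot w)w$; $\operatorname{Prin}(G)$ is the subgroup generated by all $T_v$, $D\sim D'$ iff $D-D'\in\operatorname{Prin}(G)$, and $\operatorname{Jac}(G)=\operatorname{Div}(G)/\operatorname{Prin}(G)$. Let $|D|=\{E\ge0: E\sim D\}$. The rank $r_G(D)$ is $-1$ if $|D|=\emptyset$, and otherwise the maximum $k\ge0$ such that $|D-E|\neq\emptyset$ for every effective $E$ of degree $k$. *)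

theory Defs
  imports "HOL-Algebra.Elementary_Groups" "HOL-Algebra.Coset" "HOL-Library.Function_Algebras"
begin

text \<open>A graph is given by a vertex set, an edge set and, for each edge, the
  (unordered) pair of its end vertices, stored as an ordered pair;
  an edge e is a loop iff both components of gends e coincide.\<close>

record ('v, 'e) mgraph =
  gverts :: "'v set"
  gedges :: "'e set"
  gends  :: "'e \<Rightarrow> 'v \<times> 'v"

definition wf_graph :: "('v, 'e) mgraph \<Rightarrow> bool" where
  "wf_graph G \<longleftrightarrow> finite (gverts G) \<and> finite (gedges G) \<and>
     (\<forall>e\<in>gedges G. fst (gends G e) \<in> gverts G \<and> snd (gends G e) \<in> gverts G)"

definition adj :: "('v, 'e) mgraph \<Rightarrow> ('v \<times> 'v) set" where
  "adj G = {(u, w). \<exists>e\<in>gedges G. gends G e = (u, w) \<or> gends G e = (w, u)}"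

definition connected_graph :: "('v, 'e) mgraph \<Rightarrow> bool" where
  "connected_graph G \<longleftrightarrow> wf_graph G \<and> gverts G \<noteq> {} \<and>
     (\<forall>u\<in>gverts G. \<forall>w\<in>gverts G. (u, w) \<in> (adj G)\<^sup>*)"

definition delete_vertex :: "('v, 'e) mgraph \<Rightarrow> 'v \<Rightarrow> ('v, 'e) mgraph" where
  "delete_vertex G v =
     \<lparr>gverts = gverts G - {v},
      gedges = {e\<in>gedges G. fst (gends G e) \<noteq> v \<and> snd (gends G e) \<noteq> v},
      gends = gends G\<rparr>"

definition cut_vertex :: "('v, 'e) mgraph \<Rightarrow> 'v \<Rightarrow> bool" where
  "cut_vertex G v \<longleftrightarrow> v \<in> gverts G \<and>
     (\<exists>u\<in>gverts G - {v}. \<exists>w\<in>gverts G - {v}.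
        (u, w) \<notin> (adj (delete_vertex G v))\<^sup>*)"

definition subgraph :: "('v, 'e) mgraph \<Rightarrow> ('v, 'e) mgraph \<Rightarrow> bool" where
  "subgraph H G \<longleftrightarrow> gverts H \<subseteq> gverts G \<and> gedges H \<subseteq> gedges G \<and>
     (\<forall>e\<in>gedges H. gends H e = gends G e)"

definition wedge_decomp ::
  "('v, 'e) mgraph \<Rightarrow> 'v \<Rightarrow> ('v, 'e) mgraph \<Rightarrow> ('v, 'e) mgraph \<Rightarrow> bool" where
  "wedge_decomp G v H1 H2 \<longleftrightarrow>
     subgraph H1 G \<and> subgraph H2 G \<and> connected_graph H1 \<and> connected_graph H2 \<and>
     gverts H1 \<inter> gverts H2 = {v} \<and> gedges H1 \<inter> gedges H2 = {} \<and>
     gverts H1 \<union> gverts H2 = gverts G \<and> gedges H1 \<union> gedges H2 = gedges G"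

definition nedges :: "('v, 'e) mgraph \<Rightarrow> 'v \<Rightarrow> 'v \<Rightarrow> nat" where
  "nedges G v w = card {e\<in>gedges G. gends G e = (v, w) \<or> gends G e = (w, v)}"

definition nloops :: "('v, 'e) mgraph \<Rightarrow> 'v \<Rightarrow> nat" where
  "nloops G v = card {e\<in>gedges G. gends G e = (v, v)}"

text \<open>Valency; a loop counts twice.\<close>
definition valency :: "('v, 'e) mgraph \<Rightarrow> 'v \<Rightarrow> nat" where
  "valency G v = card {e\<in>gedges G. fst (gends G e) = v} + card {e\<in>gedges G. snd (gends G e) = v}"

definition inum :: "('v, 'e) mgraph \<Rightarrow> 'v \<Rightarrow> 'v \<Rightarrow> int" where
  "inum G v w = (if v \<noteq> w then int (nedges G v w)
                 else - int (valency G v) + 2 * int (nloops G v))"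

definition divs :: "('v, 'e) mgraph \<Rightarrow> ('v \<Rightarrow> int) set" where
  "divs G = {D. \<forall>u. u \<notin> gverts G \<longrightarrow> D u = 0}"

definition deg :: "('v, 'e) mgraph \<Rightarrow> ('v \<Rightarrow> int) \<Rightarrow> int" where
  "deg G D = (\<Sum>u\<in>gverts G. D u)"

definition effective :: "('v \<Rightarrow> int) \<Rightarrow> bool" where
  "effective D \<longleftrightarrow> (\<forall>u. D u \<ge> 0)"

definition Tdiv :: "('v, 'e) mgraph \<Rightarrow> 'v \<Rightarrow> 'v \<Rightarrow> int" where
  "Tdiv G v = (\<lambda>w. if w \<in> gverts G then inum G v w else 0)"

text \<open>Prin(G): the subgroup generated by the T_v (V(G) finite, so integer combinations).\<close>
definition prin :: "('v, 'e) mgraph \<Rightarrow> ('v \<Rightarrow> int) set" where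
  "prin G = {D. \<exists>c :: 'v \<Rightarrow> int. D = (\<lambda>w. \<Sum>u\<in>gverts G. c u * Tdiv G u w)}"

definition lin_equiv :: "('v, 'e) mgraph \<Rightarrow> ('v \<Rightarrow> int) \<Rightarrow> ('v \<Rightarrow> int) \<Rightarrow> bool" where
  "lin_equiv G D D' \<longleftrightarrow> D - D' \<in> prin G"

definition linsys :: "('v, 'e) mgraph \<Rightarrow> ('v \<Rightarrow> int) \<Rightarrow> ('v \<Rightarrow> int) set" where
  "linsys G D = {E \<in> divs G. effective E \<and> lin_equiv G E D}"

definition rank :: "('v, 'e) mgraph \<Rightarrow> ('v \<Rightarrow> int) \<Rightarrow> int" where
  "rank G D = (if linsys G D = {} then -1
     else int (GREATEST k::nat. \<forall>E\<in>divs G. effective E \<and> deg G E = int k \<longrightarrow>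
                                  linsys G (D - E) \<noteq> {}))"

definition Div_grp :: "('v, 'e) mgraph \<Rightarrow> ('v \<Rightarrow> int) monoid" where
  "Div_grp G = \<lparr>carrier = divs G, monoid.mult = (+), one = 0\<rparr>"

definition Prin_grp :: "('v, 'e) mgraph \<Rightarrow> ('v \<Rightarrow> int) monoid" where
  "Prin_grp G = \<lparr>carrier = prin G, monoid.mult = (+), one = 0\<rparr>"

definition Jac_grp :: "('v, 'e) mgraph \<Rightarrow> ('v \<Rightarrow> int) set monoid" where
  "Jac_grp G = Div_grp G Mod prin G"

definition jcls :: "('v, 'e) mgraph \<Rightarrow> ('v \<Rightarrow> int) \<Rightarrow> ('v \<Rightarrow> int) set" where
  "jcls G D = r_coset (Div_grp G) (prin G) D"

definition ext0 :: "('v, 'e) mgraph \<Rightarrow> ('v \<Rightarrow> int) \<Rightarrow> 'v \<Rightarrow> int" where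
  "ext0 H D = (\<lambda>u. if u \<in> gverts H then D u else 0)"

definition glue :: "('v, 'e) mgraph \<Rightarrow> ('v, 'e) mgraph \<Rightarrow>
    ('v \<Rightarrow> int) \<times> ('v \<Rightarrow> int) \<Rightarrow> 'v \<Rightarrow> int" where
  "glue H1 H2 = (\<lambda>(D1, D2). \<lambda>u. ext0 H1 D1 u + ext0 H2 D2 u)"

end

theory Submission
  imports Defs
begin

text \<open>Every edge of G lies in exactly one of H1, H2, so the intersection numbers of G are
  the sums of those of H1 and H2; hence Prin(G) = Prin(H1) + Prin(H2). Because the column
  sums of an intersection matrix vanish, the coefficients of a principal divisor of Hj can
  be normalised to vanish at v, which shows Prin(Hj) \<subseteq> Prin(G), and because principal
  divisors have degree 0 the sum is direct. The kernel of gluing consists of the pairs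
  (a v, -a v); modulo principal divisors this stays a copy of \<int>, detected by the degree of
  the first component. For the ranks, an effective divisor on G splits into effective parts
  on H1 and H2, which gives (3); for (4), a divisor on G linearly equivalent to D - E is
  pushed into H1 by moving its whole H2-part onto v, which preserves effectivity and,
  again by degree 0 of principal divisors of H2, linear equivalence.\<close>

section \<open>Intersection numbers and principal divisors\<close>

definition edge_inum :: "'v \<times> 'v \<Rightarrow> 'v \<Rightarrow> 'v \<Rightarrow> int" where
  "edge_inum p u w =
     (if u \<noteq> w then (if p = (u, w) \<or> p = (w, u) then 1 else 0)
      else 2 * (if p = (u, u) then 1 else 0) - (if fst p = u then 1 else 0) - (if snd p = u then 1 else 0))"

lemma inum_eq_sum_edge_inum:
  assumes "finite (gedges H)"
  shows "inum H u w = (\<Sum>e\<in>gedges H. edge_inum (gends H e) u w)"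
proof -
  have card_eq: "int (card {e\<in>gedges H. P e}) = (\<Sum>e\<in>gedges H. if P e then 1 else 0)" for P
    using assms by (simp add: sum.inter_filter[symmetric])
  show ?thesis
    by (cases "u = w")
       (simp_all add: inum_def nedges_def nloops_def valency_def edge_inum_def card_eq
         sum.distrib sum_subtractf sum_distrib_left)
qed

lemma edge_inum_commute: "edge_inum p u w = edge_inum p w u"
  by (cases p) (auto simp: edge_inum_def)

lemma edge_inum_eq_0: "u \<notin> {fst p, snd p} \<or> w \<notin> {fst p, snd p} \<Longrightarrow> edge_inum p u w = 0"
  by (cases p) (auto simp: edge_inum_def)

lemma sum_edge_inum_eq_0:
  assumes "finite V" "fst p \<in> V" "snd p \<in> V"
  shows "(\<Sum>w\<in>V. edge_inum p u w) = 0"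
proof -
  obtain a b where p: "p = (a, b)" by (cases p)
  have "(\<Sum>w\<in>V. edge_inum p u w) = (\<Sum>w\<in>{a, b}. edge_inum p u w)"
    using assms p by (intro sum.mono_neutral_right) (auto intro: edge_inum_eq_0)
  also have "\<dots> = 0"
    by (cases "a = b") (auto simp: p edge_inum_def)
  finally show ?thesis .
qed

lemma inum_commute: "wf_graph H \<Longrightarrow> inum H u w = inum H w u"
  by (simp add: wf_graph_def inum_eq_sum_edge_inum edge_inum_commute[of _ u])

lemma inum_eq_0: "wf_graph H \<Longrightarrow> u \<notin> gverts H \<or> w \<notin> gverts H \<Longrightarrow> inum H u w = 0"
  unfolding wf_graph_def by (auto simp: inum_eq_sum_edge_inum intro!: sum.neutral edge_inum_eq_0)

lemma sum_inum_eq_0: "wf_graph H \<Longrightarrow> (\<Sum>w\<in>gverts H. inum H u w) = 0"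
  unfolding wf_graph_def
  by (simp add: inum_eq_sum_edge_inum) (subst sum.swap, simp add: sum_edge_inum_eq_0)

lemma sum_inum_eq_0': "wf_graph H \<Longrightarrow> (\<Sum>u\<in>gverts H. inum H u w) = 0"
  using sum_inum_eq_0[of H w] by (simp add: inum_commute)

lemma Tdiv_eq_inum: "wf_graph H \<Longrightarrow> Tdiv H u = inum H u"
  by (auto simp: Tdiv_def fun_eq_iff inum_eq_0)

lemma prin_iff:
  "wf_graph H \<Longrightarrow> P \<in> prin H \<longleftrightarrow> (\<exists>c. P = (\<lambda>w. \<Sum>u\<in>gverts H. c u * inum H u w))"
  by (simp add: prin_def Tdiv_eq_inum)

lemma prin_subset_divs: "wf_graph H \<Longrightarrow> prin H \<subseteq> divs H"
  by (auto simp: prin_iff divs_def inum_eq_0)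

lemma zero_in_prin: "wf_graph H \<Longrightarrow> 0 \<in> prin H"
  by (auto simp: prin_iff fun_eq_iff intro: exI[of _ "\<lambda>_. 0"])

lemma prin_add: "wf_graph H \<Longrightarrow> P \<in> prin H \<Longrightarrow> Q \<in> prin H \<Longrightarrow> P + Q \<in> prin H"
proof -
  assume "wf_graph H" "P \<in> prin H" "Q \<in> prin H"
  then obtain c d where "P = (\<lambda>w. \<Sum>u\<in>gverts H. c u * inum H u w)"
    and "Q = (\<lambda>w. \<Sum>u\<in>gverts H. d u * inum H u w)" by (auto simp: prin_iff)
  then have "P + Q = (\<lambda>w. \<Sum>u\<in>gverts H. (c u + d u) * inum H u w)"
    by (simp add: fun_eq_iff distrib_right sum.distrib)
  then show ?thesis unfolding prin_iff[OF \<open>wf_graph H\<close>] by (rule exI[of _ "\<lambda>u. c u + d u"])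
qed

lemma prin_uminus: "wf_graph H \<Longrightarrow> P \<in> prin H \<Longrightarrow> - P \<in> prin H"
proof -
  assume "wf_graph H" "P \<in> prin H"
  then obtain c where "P = (\<lambda>w. \<Sum>u\<in>gverts H. c u * inum H u w)" by (auto simp: prin_iff)
  then have "- P = (\<lambda>w. \<Sum>u\<in>gverts H. (- c u) * inum H u w)"
    by (simp add: fun_eq_iff sum_negf)
  then show ?thesis unfolding prin_iff[OF \<open>wf_graph H\<close>] by (rule exI[of _ "\<lambda>u. - c u"])
qed

lemma prin_diff: "wf_graph H \<Longrightarrow> P \<in> prin H \<Longrightarrow> Q \<in> prin H \<Longrightarrow> P - Q \<in> prin H"
  using prin_add[of H P "- Q"] prin_uminus[of H Q] by simp

lemma sum_shifted_inum:
  "wf_graph H \<Longrightarrow> (\<Sum>u\<in>gverts H. (c u - a) * inum H u w) = (\<Sum>u\<in>gverts H. c u * inum H u w)"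
  by (simp add: left_diff_distrib sum_subtractf sum_distrib_left[symmetric] sum_inum_eq_0')

lemma deg_add: "deg H (D + D') = deg H D + deg H D'"
  by (simp add: deg_def sum.distrib)

lemma deg_diff: "deg H (D - D') = deg H D - deg H D'"
  by (simp add: deg_def sum_subtractf)

lemma deg_nonneg: "effective D \<Longrightarrow> 0 \<le> deg H D"
  by (auto simp: deg_def effective_def intro: sum_nonneg)

lemma deg_prin: "wf_graph H \<Longrightarrow> P \<in> prin H \<Longrightarrow> deg H P = 0"
  by (auto simp: prin_iff deg_def sum_distrib_left[symmetric] sum_inum_eq_0 intro: trans[OF sum.swap])

lemma divs_add: "D \<in> divs H \<Longrightarrow> D' \<in> divs H \<Longrightarrow> D + D' \<in> divs H"
  and divs_diff: "D \<in> divs H \<Longrightarrow> D' \<in> divs H \<Longrightarrow> D - D' \<in> divs H"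
  and zero_in_divs: "0 \<in> divs H"
  by (simp_all add: divs_def)

lemma ext0_eq_self: "D \<in> divs H \<Longrightarrow> ext0 H D = D"
  by (auto simp: ext0_def divs_def)

section \<open>The groups Div, Prin and Jac\<close>

lemma Div_grp_simps [simp]:
  "carrier (Div_grp H) = divs H" "x \<otimes>\<^bsub>Div_grp H\<^esub> y = x + y" "\<one>\<^bsub>Div_grp H\<^esub> = 0"
  by (simp_all add: Div_grp_def)

lemma Prin_grp_simps [simp]:
  "carrier (Prin_grp H) = prin H" "x \<otimes>\<^bsub>Prin_grp H\<^esub> y = x + y" "\<one>\<^bsub>Prin_grp H\<^esub> = 0"
  by (simp_all add: Prin_grp_def)

lemma comm_group_Div_grp: "comm_group (Div_grp H)"
proof (rule comm_groupI)
  show "\<exists>y\<in>carrier (Div_grp H). y \<otimes>\<^bsub>Div_grp H\<^esub> D = \<one>\<^bsub>Div_grp H\<^esub>"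
    if "D \<in> carrier (Div_grp H)" for D
    using that by (intro bexI[of _ "- D"]) (auto simp: divs_def)
qed (auto simp: divs_def)

interpretation Div: comm_group "Div_grp H"
  by (rule comm_group_Div_grp)

lemma inv_Div_grp [simp]: "D \<in> divs H \<Longrightarrow> inv\<^bsub>Div_grp H\<^esub> D = - D"
  by (rule Div.inv_equality) (auto simp: divs_def)

lemma subgroup_prin: "wf_graph H \<Longrightarrow> subgroup (prin H) (Div_grp H)"
  using prin_subset_divs[of H] zero_in_prin[of H] prin_add[of H] prin_uminus[of H]
  by (intro Div.subgroupI) auto

lemma comm_group_Jac_grp: "wf_graph H \<Longrightarrow> comm_group (Jac_grp H)"
  unfolding Jac_grp_def by (rule Div.abelian_FactGroup[OF subgroup_prin])

lemma jcls_hom: "wf_graph H \<Longrightarrow> jcls H \<in> hom (Div_grp H) (Jac_grp H)"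
  using normal.r_coset_hom_Mod[OF Div.subgroup_imp_normal[OF subgroup_prin]]
  by (simp add: Jac_grp_def jcls_def[abs_def])

lemma jcls_eq: "jcls H D = {X. X - D \<in> prin H}"
  by (force simp: jcls_def r_coset_def)

lemma jcls_eq_jcls_iff: "wf_graph H \<Longrightarrow> jcls H D = jcls H D' \<longleftrightarrow> D - D' \<in> prin H"
proof
  assume "wf_graph H" "jcls H D = jcls H D'"
  moreover have "D \<in> jcls H D" using zero_in_prin[OF \<open>wf_graph H\<close>] by (simp add: jcls_eq)
  ultimately show "D - D' \<in> prin H" by (simp add: jcls_eq)
next
  assume "wf_graph H" "D - D' \<in> prin H"
  then have "X - D \<in> prin H \<longleftrightarrow> X - D' \<in> prin H" for X
    using prin_add[of H "X - D" "D - D'"] prin_diff[of H "X - D'" "D - D'"] by auto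
  then show "jcls H D = jcls H D'" by (simp add: jcls_eq)
qed

lemma carrier_Jac_grp: "carrier (Jac_grp H) = jcls H ` divs H"
  by (simp add: Jac_grp_def carrier_FactGroup jcls_def)

lemma one_Jac_grp: "\<one>\<^bsub>Jac_grp H\<^esub> = jcls H 0"
  by (simp add: Jac_grp_def jcls_def r_coset_def)

lemma mult_Jac_grp:
  assumes "wf_graph H" "D \<in> divs H" "D' \<in> divs H"
  shows "jcls H D \<otimes>\<^bsub>Jac_grp H\<^esub> jcls H D' = jcls H (D + D')"
  using hom_mult[OF jcls_hom[OF assms(1)], of D D'] assms(2,3) by simp

lemma Jac_grp_universal:
  assumes "wf_graph H" "group K" "f \<in> hom (Div_grp H) K" "\<And>P. P \<in> prin H \<Longrightarrow> f P = \<one>\<^bsub>K\<^esub>"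
  obtains g where "g \<in> hom (Jac_grp H) K" "\<And>D. D \<in> divs H \<Longrightarrow> g (jcls H D) = f D"
proof (rule FactGroup_universal[OF assms(3) Div.subgroup_imp_normal[OF subgroup_prin[OF assms(1)]]])
  interpret K: group K by (rule assms(2))
  fix D D' assume D: "D \<in> carrier (Div_grp H)" "D' \<in> carrier (Div_grp H)"
    and "prin H #>\<^bsub>Div_grp H\<^esub> D = prin H #>\<^bsub>Div_grp H\<^esub> D'"
  then have "D - D' \<in> prin H" using jcls_eq_jcls_iff[OF assms(1)] by (simp add: jcls_def)
  then have "f D = f (D - D') \<otimes>\<^bsub>K\<^esub> f D'"
    using D hom_mult[OF assms(3), of "D - D'" D'] by (simp add: divs_diff)
  then show "f D = f D'"
    using D assms(4) \<open>D - D' \<in> prin H\<close> hom_in_carrier[OF assms(3)] by simp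
qed (auto simp: Jac_grp_def jcls_def)

lemma (in comm_group) hom_DirProd_mult:
  assumes "f \<in> hom A G" "g \<in> hom B G"
  shows "(\<lambda>(x, y). f x \<otimes> g y) \<in> hom (A \<times>\<times> B) G"
proof (rule homI)
  fix p q assume "p \<in> carrier (A \<times>\<times> B)" "q \<in> carrier (A \<times>\<times> B)"
  then show "(\<lambda>(x, y). f x \<otimes> g y) (p \<otimes>\<^bsub>A \<times>\<times> B\<^esub> q) =
             (\<lambda>(x, y). f x \<otimes> g y) p \<otimes> (\<lambda>(x, y). f x \<otimes> g y) q"
    using hom_in_carrier[OF assms(1)] hom_in_carrier[OF assms(2)]
    by (auto simp: hom_mult[OF assms(1)] hom_mult[OF assms(2)] m_ac)
qed (use hom_in_carrier[OF assms(1)] hom_in_carrier[OF assms(2)] in auto)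

lemma iso_integer_group_range:
  fixes g :: "'a \<Rightarrow> int"
  assumes "K = range emb" "\<And>a. g (emb a) = a"
    and "\<And>a b. emb a \<otimes>\<^bsub>M\<^esub> emb b = emb (a + b)"
  shows "M\<lparr>carrier := K\<rparr> \<cong> integer_group"
proof -
  have "g \<in> hom (M\<lparr>carrier := K\<rparr>) integer_group"
    by (rule homI) (use assms in auto)
  moreover have "bij_betw g K UNIV"
    by (rule bij_betwI'[where f = g]) (use assms in \<open>auto intro: rangeI exI[of _ "emb a" for a]\<close>)
  ultimately show ?thesis
    unfolding is_iso_def iso_def by auto
qed

section \<open>Rank\<close>

definition point_div :: "'v \<Rightarrow> int \<Rightarrow> 'v \<Rightarrow> int" where
  "point_div x a = (\<lambda>u. if u = x then a else 0)"

lemma point_div_in_divs: "x \<in> gverts H \<Longrightarrow> point_div x a \<in> divs H"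
  by (simp add: divs_def point_div_def)

lemma deg_point_div: "finite (gverts H) \<Longrightarrow> x \<in> gverts H \<Longrightarrow> deg H (point_div x a) = a"
  by (simp add: deg_def point_div_def)

lemma point_div_add: "point_div x a + point_div x b = point_div x (a + b)"
  by (simp add: point_div_def fun_eq_iff)

definition absorbs_deg :: "('v, 'e) mgraph \<Rightarrow> ('v \<Rightarrow> int) \<Rightarrow> nat \<Rightarrow> bool" where
  "absorbs_deg H D k \<longleftrightarrow>
     (\<forall>E\<in>divs H. effective E \<and> deg H E = int k \<longrightarrow> linsys H (D - E) \<noteq> {})"

lemma rank_eq_Greatest_absorbs_deg:
  "linsys H D \<noteq> {} \<Longrightarrow> rank H D = int (GREATEST k. absorbs_deg H D k)"
  by (simp add: rank_def absorbs_deg_def)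

lemma deg_nonneg_if_linsys: "wf_graph H \<Longrightarrow> F \<in> linsys H D \<Longrightarrow> 0 \<le> deg H D"
  using deg_prin[of H "F - D"] deg_nonneg[of F H]
  by (auto simp: linsys_def lin_equiv_def deg_diff)

lemma linsys_add_effective:
  assumes "F \<in> linsys H (D - (E + A))" "A \<in> divs H" "effective A"
  shows "F + A \<in> linsys H (D - E)"
proof -
  have eq: "F + A - (D - E) = F - (D - (E + A))" by (simp add: algebra_simps)
  have "F + A - (D - E) \<in> prin H"
    using assms(1) unfolding eq linsys_def lin_equiv_def by blast
  then show ?thesis
    using assms by (auto simp: linsys_def lin_equiv_def effective_def intro: divs_add add_nonneg_nonneg)
qed

context
  fixes H :: "('v, 'e) mgraph" and x :: 'v
  assumes wf: "wf_graph H" and x: "x \<in> gverts H"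
begin

lemma absorbs_deg_le_deg: "absorbs_deg H D k \<Longrightarrow> int k \<le> deg H D"
  using point_div_in_divs[OF x, of "int k"] deg_point_div[OF _ x, of "int k"] wf
    deg_nonneg_if_linsys[OF wf, of _ "D - point_div x (int k)"]
  by (fastforce simp: absorbs_deg_def wf_graph_def effective_def point_div_def deg_diff)

text \<open>Padding E by a multiple of a single vertex up to degree m.\<close>

lemma absorbs_deg_imp_linsys:
  assumes "absorbs_deg H D m" "E \<in> divs H" "effective E" "deg H E \<le> int m"
  shows "linsys H (D - E) \<noteq> {}"
proof -
  define A where "A = point_div x (int m - deg H E)"
  have A: "A \<in> divs H" "effective A" "deg H (E + A) = int m"
    using assms(4) wf x
    by (simp_all add: A_def point_div_in_divs deg_point_div deg_add wf_graph_def)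
       (simp add: effective_def point_div_def)
  moreover have "E + A \<in> divs H" "effective (E + A)"
    using A assms(2,3) by (auto simp: divs_add effective_def)
  ultimately obtain F where "F \<in> linsys H (D - (E + A))"
    using assms(1) unfolding absorbs_deg_def by blast
  then show ?thesis using linsys_add_effective A by blast
qed

lemma absorbs_deg_bounded: "absorbs_deg H D j \<Longrightarrow> j \<le> nat (deg H D)"
  using absorbs_deg_le_deg by fastforce

lemma int_le_rank_iff:
  "int k \<le> rank H D \<longleftrightarrow>
   (\<forall>E\<in>divs H. effective E \<and> deg H E \<le> int k \<longrightarrow> linsys H (D - E) \<noteq> {})"
proof
  assume k: "int k \<le> rank H D"
  then have ne: "linsys H D \<noteq> {}" by (auto simp: rank_def)
  have "E = 0" if "E \<in> divs H" "effective E" "deg H E = 0" for E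
    using that wf by (auto simp: wf_graph_def deg_def effective_def divs_def
                                sum_nonneg_eq_0_iff fun_eq_iff)
  then have "absorbs_deg H D 0"
    using ne unfolding absorbs_deg_def by force
  then have "absorbs_deg H D (GREATEST j. absorbs_deg H D j)"
    using absorbs_deg_bounded by (rule GreatestI_nat)
  moreover have "int k \<le> int (GREATEST j. absorbs_deg H D j)"
    using k ne by (simp add: rank_eq_Greatest_absorbs_deg)
  ultimately show "\<forall>E\<in>divs H. effective E \<and> deg H E \<le> int k \<longrightarrow> linsys H (D - E) \<noteq> {}"
    using absorbs_deg_imp_linsys by force
next
  assume L: "\<forall>E\<in>divs H. effective E \<and> deg H E \<le> int k \<longrightarrow> linsys H (D - E) \<noteq> {}"
  then have "linsys H (D - 0) \<noteq> {}"
    using zero_in_divs[of H] by (force simp: effective_def deg_def)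
  moreover have "absorbs_deg H D k"
    using L by (simp add: absorbs_deg_def)
  then have "k \<le> (GREATEST j. absorbs_deg H D j)"
    using absorbs_deg_bounded by (rule Greatest_le_nat)
  ultimately show "int k \<le> rank H D" by (simp add: rank_eq_Greatest_absorbs_deg)
qed

end

lemma rank_ge_minus_1: "-1 \<le> rank H D"
  by (simp add: rank_def)

section \<open>Wedge sums\<close>

locale wedge =
  fixes G :: "('v, 'e) mgraph" and v :: 'v and H1 H2 :: "('v, 'e) mgraph"
  assumes wf_G: "wf_graph G" and decomp: "wedge_decomp G v H1 H2"
begin

lemma swap: "wedge G v H2 H1"
  using wf_G decomp by (auto simp: wedge_def wedge_decomp_def)

lemma wf_H1: "wf_graph H1"
  using decomp by (simp add: wedge_decomp_def connected_graph_def)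

lemma verts_inter: "gverts H1 \<inter> gverts H2 = {v}"
  and verts_union: "gverts H1 \<union> gverts H2 = gverts G"
  and edges_inter: "gedges H1 \<inter> gedges H2 = {}"
  and edges_union: "gedges H1 \<union> gedges H2 = gedges G"
  and subgraph_H1: "subgraph H1 G"
  using decomp by (simp_all add: wedge_decomp_def)

lemma v_in_H1: "v \<in> gverts H1"
  using verts_inter by auto

lemma not_in_H2: "u \<in> gverts H1 \<Longrightarrow> u \<noteq> v \<Longrightarrow> u \<notin> gverts H2"
  using verts_inter by auto

lemma divs_H1_subset: "divs H1 \<subseteq> divs G"
  using verts_union by (auto simp: divs_def)

lemma deg_H1: "D \<in> divs H1 \<Longrightarrow> deg G D = deg H1 D"
  unfolding deg_def using wf_G verts_union
  by (intro sum.mono_neutral_right) (auto simp: divs_def wf_graph_def)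

lemma sum_inum_H1:
  "(\<Sum>u\<in>gverts G. c u * inum H1 u w) = (\<Sum>u\<in>gverts H1. c u * inum H1 u w)"
  using wf_G verts_union
  by (intro sum.mono_neutral_right) (auto simp: wf_graph_def inum_eq_0[OF wf_H1])

lemma inum_wedge: "inum G u w = inum H1 u w + inum H2 u w"
proof -
  have fin: "finite (gedges H1)" "finite (gedges H2)"
    using wf_G by (simp_all add: wf_graph_def flip: edges_union)
  have "gends G e = gends H1 e" if "e \<in> gedges H1" for e
    using subgraph_H1 that by (simp add: subgraph_def)
  moreover have "gends G e = gends H2 e" if "e \<in> gedges H2" for e
    using decomp that by (simp add: wedge_decomp_def subgraph_def)
  ultimately show ?thesis
    using fin wf_G edges_inter
    by (simp add: inum_eq_sum_edge_inum wf_graph_def sum.union_disjoint flip: edges_union)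
qed

end

text \<open>The symmetric instance provides every fact for H2 as swap.fact; facts proved later
  reach it only in a freshly opened context, hence the repeated context blocks below.\<close>

sublocale wedge \<subseteq> swap: wedge G v H2 H1
  by (rule swap)

context wedge
begin

lemma prin_G_split: "P \<in> prin G \<Longrightarrow> \<exists>P1\<in>prin H1. \<exists>P2\<in>prin H2. P = P1 + P2"
proof -
  assume "P \<in> prin G"
  then obtain c where "P = (\<lambda>w. \<Sum>u\<in>gverts G. c u * inum G u w)"
    using wf_G by (auto simp: prin_iff)
  then have "P = (\<lambda>w. \<Sum>u\<in>gverts H1. c u * inum H1 u w) + (\<lambda>w. \<Sum>u\<in>gverts H2. c u * inum H2 u w)"
    by (simp add: fun_eq_iff inum_wedge distrib_left sum.distrib sum_inum_H1 swap.sum_inum_H1)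
  then show ?thesis
    using prin_iff[OF wf_H1] prin_iff[OF swap.wf_H1] by blast
qed

lemma prin_H1_subset: "prin H1 \<subseteq> prin G"
proof
  fix P assume "P \<in> prin H1"
  then obtain c where c: "P = (\<lambda>w. \<Sum>u\<in>gverts H1. c u * inum H1 u w)"
    using wf_H1 by (auto simp: prin_iff)
  define c' where "c' = (\<lambda>u. if u \<in> gverts H1 then c u - c v else 0)"
  have "(\<Sum>u\<in>gverts G. c' u * inum G u w) = P w" for w
  proof -
    have "(\<Sum>u\<in>gverts H2. c' u * inum H2 u w) = 0"
      using verts_inter by (intro sum.neutral) (auto simp: c'_def)
    moreover have "(\<Sum>u\<in>gverts H1. c' u * inum H1 u w) = (\<Sum>u\<in>gverts H1. (c u - c v) * inum H1 u w)"
      by (intro sum.cong) (auto simp: c'_def)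
    ultimately show ?thesis
      by (simp add: c inum_wedge distrib_left sum.distrib sum_inum_H1 swap.sum_inum_H1
                    sum_shifted_inum[OF wf_H1])
  qed
  then show "P \<in> prin G"
    unfolding prin_iff[OF wf_G] by (intro exI[of _ c']) (simp add: fun_eq_iff)
qed

lemma glue_eq_add: "D1 \<in> divs H1 \<Longrightarrow> D2 \<in> divs H2 \<Longrightarrow> glue H1 H2 (D1, D2) = D1 + D2"
  by (simp add: glue_def ext0_eq_self fun_eq_iff)

lemma add_eq_0_imp_point_divs:
  assumes "D1 \<in> divs H1" "D2 \<in> divs H2" "D1 + D2 = 0"
  shows "D1 = point_div v (D1 v) \<and> D2 = point_div v (- D1 v)"
proof -
  have D2: "D2 = - D1"
    using assms(3) by (simp add: eq_neg_iff_add_eq_0 add.commute)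
  have "D1 u = 0" if "u \<noteq> v" for u
    using assms(1,2) that verts_inter unfolding D2 divs_def by auto
  then show ?thesis
    by (auto simp: D2 point_div_def fun_eq_iff)
qed

lemma prin_add_eq_0:
  assumes "P1 \<in> prin H1" "P2 \<in> prin H2" "P1 + P2 = 0"
  shows "P1 = 0 \<and> P2 = 0"
proof -
  have P: "P1 = point_div v (P1 v) \<and> P2 = point_div v (- P1 v)"
    using add_eq_0_imp_point_divs assms prin_subset_divs wf_H1 swap.wf_H1 by blast
  then have "P1 v = deg H1 P1"
    using deg_point_div[of H1 v "P1 v"] wf_H1 v_in_H1 by (simp add: wf_graph_def)
  then have "P1 v = 0"
    using deg_prin[OF wf_H1 assms(1)] by simp
  then show ?thesis
    using P by (simp add: point_div_def fun_eq_iff)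
qed

definition collapse_to_H1 :: "('v \<Rightarrow> int) \<Rightarrow> 'v \<Rightarrow> int" where
  "collapse_to_H1 F =
     (\<lambda>u. if u \<in> gverts H1 then F u + (if u = v then \<Sum>x\<in>gverts H2 - {v}. F x else 0) else 0)"

lemma collapse_to_H1_in_divs: "collapse_to_H1 F \<in> divs H1"
  by (simp add: collapse_to_H1_def divs_def)

lemma collapse_to_H1_effective: "effective F \<Longrightarrow> effective (collapse_to_H1 F)"
  by (auto simp: collapse_to_H1_def effective_def intro!: add_nonneg_nonneg sum_nonneg)

lemma collapse_to_H1_diff_prin:
  assumes "X \<in> divs H1" "F - X \<in> prin G"
  shows "collapse_to_H1 F - X \<in> prin H1"
proof -
  obtain P1 P2 where P: "P1 \<in> prin H1" "P2 \<in> prin H2" "F - X = P1 + P2"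
    using prin_G_split[OF assms(2)] by blast
  have P_divs: "P1 \<in> divs H1" "P2 \<in> divs H2"
    using P prin_subset_divs wf_H1 swap.wf_H1 by auto
  have FX: "F u = X u + P1 u + P2 u" for u
    using fun_cong[OF P(3), of u] by simp
  have "P2 u = F u" if "u \<in> gverts H2 - {v}" for u
    using that swap.not_in_H2 assms(1) P_divs FX[of u] by (auto simp: divs_def)
  then have "(\<Sum>x\<in>gverts H2 - {v}. F x) = (\<Sum>x\<in>gverts H2 - {v}. P2 x)"
    by simp
  also have "\<dots> = - P2 v"
    using deg_prin[OF swap.wf_H1 P(2)] swap.wf_H1 swap.v_in_H1
    by (simp add: deg_def sum.remove wf_graph_def)
  finally have "collapse_to_H1 F - X = P1"
    using assms(1) P_divs FX not_in_H2 v_in_H1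
    by (auto simp: collapse_to_H1_def divs_def fun_eq_iff)
  then show ?thesis
    using P(1) by simp
qed

lemma prin_G_Int_divs_H1: "prin G \<inter> divs H1 = prin H1"
proof
  show "prin G \<inter> divs H1 \<subseteq> prin H1"
  proof
    fix X assume X: "X \<in> prin G \<inter> divs H1"
    then have "collapse_to_H1 0 - (- X) \<in> prin H1"
      using collapse_to_H1_diff_prin[of "- X" 0] by (simp add: divs_def)
    moreover have "collapse_to_H1 0 = 0"
      by (simp add: collapse_to_H1_def fun_eq_iff)
    ultimately show "X \<in> prin H1" by simp
  qed
qed (use prin_H1_subset prin_subset_divs[OF wf_H1] in auto)

end

context wedge
begin

lemma glue_in_divs: "D1 \<in> divs H1 \<Longrightarrow> D2 \<in> divs H2 \<Longrightarrow> glue H1 H2 (D1, D2) \<in> divs G"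
  using divs_H1_subset swap.divs_H1_subset by (auto simp: glue_eq_add intro: divs_add)

lemma divs_G_decompose:
  "D \<in> divs G \<Longrightarrow> ext0 H1 D \<in> divs H1 \<and> D - ext0 H1 D \<in> divs H2 \<and> D = glue H1 H2 (ext0 H1 D, D - ext0 H1 D)"
  using verts_union by (auto simp: glue_def ext0_def divs_def fun_eq_iff)

lemma glue_hom: "glue H1 H2 \<in> hom (Div_grp H1 \<times>\<times> Div_grp H2) (Div_grp G)"
proof (rule homI)
  fix p q assume "p \<in> carrier (Div_grp H1 \<times>\<times> Div_grp H2)" "q \<in> carrier (Div_grp H1 \<times>\<times> Div_grp H2)"
  then show "glue H1 H2 (p \<otimes>\<^bsub>Div_grp H1 \<times>\<times> Div_grp H2\<^esub> q) = glue H1 H2 p \<otimes>\<^bsub>Div_grp G\<^esub> glue H1 H2 q"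
    by (auto simp: glue_def ext0_def fun_eq_iff)
qed (auto simp: glue_in_divs)

lemma glue_image: "glue H1 H2 ` carrier (Div_grp H1 \<times>\<times> Div_grp H2) = carrier (Div_grp G)"
  using glue_in_divs divs_G_decompose by fastforce

lemma kernel_glue:
  "kernel (Div_grp H1 \<times>\<times> Div_grp H2) (Div_grp G) (glue H1 H2) =
   range (\<lambda>a. (point_div v a, point_div v (- a)))"
proof (intro equalityI subsetI)
  fix p assume "p \<in> kernel (Div_grp H1 \<times>\<times> Div_grp H2) (Div_grp G) (glue H1 H2)"
  then obtain D1 D2 where "p = (D1, D2)" "D1 \<in> divs H1" "D2 \<in> divs H2" "D1 + D2 = 0"
    by (auto simp: kernel_def glue_eq_add)
  then show "p \<in> range (\<lambda>a. (point_div v a, point_div v (- a)))"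
    using add_eq_0_imp_point_divs by blast
next
  fix p assume "p \<in> range (\<lambda>a. (point_div v a, point_div v (- a)))"
  moreover have "point_div v a + point_div v (- a) = 0" for a
    by (simp add: point_div_def fun_eq_iff)
  ultimately show "p \<in> kernel (Div_grp H1 \<times>\<times> Div_grp H2) (Div_grp G) (glue H1 H2)"
    using point_div_in_divs[OF v_in_H1] point_div_in_divs[OF swap.v_in_H1]
    by (auto simp: kernel_def glue_eq_add)
qed

lemma kernel_glue_iso:
  "(Div_grp H1 \<times>\<times> Div_grp H2)
     \<lparr>carrier := kernel (Div_grp H1 \<times>\<times> Div_grp H2) (Div_grp G) (glue H1 H2)\<rparr>
   \<cong> integer_group"
  by (rule iso_integer_group_range[OF kernel_glue, where g = "\<lambda>p. fst p v"])
     (auto simp: point_div_def fun_eq_iff)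

lemma glue_iso_Prin: "glue H1 H2 \<in> iso (Prin_grp H1 \<times>\<times> Prin_grp H2) (Prin_grp G)"
proof -
  have glue: "glue H1 H2 (P1, P2) = P1 + P2" if "P1 \<in> prin H1" "P2 \<in> prin H2" for P1 P2
    using glue_eq_add prin_subset_divs wf_H1 swap.wf_H1 that by blast
  have sum_in_prin: "P1 + P2 \<in> prin G" if "P1 \<in> prin H1" "P2 \<in> prin H2" for P1 P2
    using that prin_H1_subset swap.prin_H1_subset prin_add[OF wf_G] by blast
  have "glue H1 H2 \<in> hom (Prin_grp H1 \<times>\<times> Prin_grp H2) (Prin_grp G)"
    by (intro homI) (auto simp: glue sum_in_prin add_ac prin_add[OF wf_H1] prin_add[OF swap.wf_H1])
  moreover have "inj_on (glue H1 H2) (prin H1 \<times> prin H2)"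
  proof (rule inj_onI, clarify)
    fix P1 P2 Q1 Q2
    assume P: "P1 \<in> prin H1" "P2 \<in> prin H2" "Q1 \<in> prin H1" "Q2 \<in> prin H2"
      and "glue H1 H2 (P1, P2) = glue H1 H2 (Q1, Q2)"
    then have "(P1 - Q1) + (P2 - Q2) = 0"
      using glue by (simp add: algebra_simps)
    then have "P1 - Q1 = 0 \<and> P2 - Q2 = 0"
      using prin_add_eq_0 prin_diff[OF wf_H1 P(1,3)] prin_diff[OF swap.wf_H1 P(2,4)] by blast
    then show "P1 = Q1 \<and> P2 = Q2" by simp
  qed
  moreover have "glue H1 H2 ` (prin H1 \<times> prin H2) = prin G"
    using prin_G_split sum_in_prin by (force simp: glue)
  ultimately show ?thesis
    by (simp add: iso_def bij_betw_def)
qed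

lemma group_Jac_G: "group (Jac_grp G)"
  using comm_group.axioms(2)[OF comm_group_Jac_grp[OF wf_G]] .

lemma jcls_G_hom_H1: "jcls G \<in> hom (Div_grp H1) (Jac_grp G)"
proof (rule homI)
  fix D D' assume "D \<in> carrier (Div_grp H1)" "D' \<in> carrier (Div_grp H1)"
  then show "jcls G (D \<otimes>\<^bsub>Div_grp H1\<^esub> D') = jcls G D \<otimes>\<^bsub>Jac_grp G\<^esub> jcls G D'"
    using divs_H1_subset mult_Jac_grp[OF wf_G, of D D'] by (simp add: subset_iff)
qed (use divs_H1_subset in \<open>auto simp: carrier_Jac_grp\<close>)

lemma obtain_Jac_ext0:
  obtains \<phi> where "\<phi> \<in> hom (Jac_grp H1) (Jac_grp G)" "\<And>D. D \<in> divs H1 \<Longrightarrow> \<phi> (jcls H1 D) = jcls G D"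
proof (rule Jac_grp_universal[OF wf_H1 group_Jac_G jcls_G_hom_H1])
  show "jcls G P = \<one>\<^bsub>Jac_grp G\<^esub>" if "P \<in> prin H1" for P
    using that prin_H1_subset by (simp add: one_Jac_grp jcls_eq_jcls_iff[OF wf_G] subset_iff)
qed (rule that)

lemma Jac_ext0_inj:
  assumes "\<And>D. D \<in> divs H1 \<Longrightarrow> \<phi> (jcls H1 D) = jcls G D"
  shows "inj_on \<phi> (carrier (Jac_grp H1))"
proof (rule inj_onI)
  fix C C' assume "C \<in> carrier (Jac_grp H1)" "C' \<in> carrier (Jac_grp H1)" "\<phi> C = \<phi> C'"
  then obtain D D' where D: "D \<in> divs H1" "D' \<in> divs H1" "C = jcls H1 D" "C' = jcls H1 D'"
    and "jcls G D = jcls G D'"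
    using assms by (auto simp: carrier_Jac_grp)
  then have "D - D' \<in> prin G \<inter> divs H1"
    by (simp add: jcls_eq_jcls_iff[OF wf_G] divs_diff)
  then show "C = C'"
    using D by (simp add: prin_G_Int_divs_H1 jcls_eq_jcls_iff[OF wf_H1])
qed

lemma ext0_H1_properties:
  "ext0 H1 \<in> hom (Div_grp H1) (Div_grp G) \<and> inj_on (ext0 H1) (divs H1) \<and>
   ext0 H1 \<in> hom (Prin_grp H1) (Prin_grp G) \<and> inj_on (ext0 H1) (prin H1) \<and>
   (\<exists>\<phi> \<in> hom (Jac_grp H1) (Jac_grp G).
      (\<forall>D\<in>divs H1. \<phi> (jcls H1 D) = jcls G (ext0 H1 D)) \<and> inj_on \<phi> (carrier (Jac_grp H1)))"
proof -
  have id: "ext0 H1 D = D" if "D \<in> divs H1" for D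
    using that by (rule ext0_eq_self)
  obtain \<phi> where "\<phi> \<in> hom (Jac_grp H1) (Jac_grp G)" "\<And>D. D \<in> divs H1 \<Longrightarrow> \<phi> (jcls H1 D) = jcls G D"
    using obtain_Jac_ext0 by blast
  moreover have "ext0 H1 \<in> hom (Div_grp H1) (Div_grp G)"
    using divs_H1_subset by (intro homI) (auto simp: id divs_add)
  moreover have "ext0 H1 \<in> hom (Prin_grp H1) (Prin_grp G)"
    using prin_subset_divs[OF wf_H1] prin_H1_subset
    by (intro homI) (auto simp: id prin_add[OF wf_H1] subset_iff)
  moreover have "inj_on (ext0 H1) (divs H1)" "inj_on (ext0 H1) (prin H1)"
    using prin_subset_divs[OF wf_H1] by (auto simp: inj_on_def id subset_iff)
  ultimately show ?thesis
    using Jac_ext0_inj by (metis id)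
qed

end

context wedge
begin

lemma carrier_Jac_DirProd:
  "carrier (Jac_grp H1 \<times>\<times> Jac_grp H2) = (\<lambda>(D1, D2). (jcls H1 D1, jcls H2 D2)) ` (divs H1 \<times> divs H2)"
  by (auto simp: carrier_Jac_grp)

context
  fixes \<psi> :: "('v \<Rightarrow> int) set \<times> ('v \<Rightarrow> int) set \<Rightarrow> ('v \<Rightarrow> int) set"
  assumes \<psi>_jcls: "\<And>D1 D2. D1 \<in> divs H1 \<Longrightarrow> D2 \<in> divs H2 \<Longrightarrow> \<psi> (jcls H1 D1, jcls H2 D2) = jcls G (D1 + D2)"
begin

lemma kernel_Jac_glue:
  "kernel (Jac_grp H1 \<times>\<times> Jac_grp H2) (Jac_grp G) \<psi> =
   range (\<lambda>a. (jcls H1 (point_div v a), jcls H2 (point_div v (- a))))"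
proof (intro equalityI subsetI)
  fix p assume "p \<in> kernel (Jac_grp H1 \<times>\<times> Jac_grp H2) (Jac_grp G) \<psi>"
  then obtain D1 D2 where D: "D1 \<in> divs H1" "D2 \<in> divs H2" "p = (jcls H1 D1, jcls H2 D2)"
    and "jcls G (D1 + D2) = jcls G 0"
    by (auto simp: kernel_def carrier_Jac_grp one_Jac_grp \<psi>_jcls)
  then obtain P1 P2 where P: "P1 \<in> prin H1" "P2 \<in> prin H2" "D1 + D2 = P1 + P2"
    using prin_G_split by (metis jcls_eq_jcls_iff[OF wf_G] diff_zero)
  then have "(D1 - P1) + (D2 - P2) = 0"
    by (simp add: algebra_simps)
  moreover have "D1 - P1 \<in> divs H1" "D2 - P2 \<in> divs H2"
    using D P prin_subset_divs wf_H1 swap.wf_H1 divs_diff by blast+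
  ultimately obtain a where "D1 - P1 = point_div v a" "D2 - P2 = point_div v (- a)"
    using add_eq_0_imp_point_divs by blast
  then have "jcls H1 D1 = jcls H1 (point_div v a)" "jcls H2 D2 = jcls H2 (point_div v (- a))"
    using P by (auto simp: jcls_eq_jcls_iff[OF wf_H1] jcls_eq_jcls_iff[OF swap.wf_H1] algebra_simps)
  then show "p \<in> range (\<lambda>a. (jcls H1 (point_div v a), jcls H2 (point_div v (- a))))"
    using D by auto
next
  fix p assume "p \<in> range (\<lambda>a. (jcls H1 (point_div v a), jcls H2 (point_div v (- a))))"
  moreover have "point_div v a + point_div v (- a) = 0" for a
    by (simp add: point_div_def fun_eq_iff)
  ultimately show "p \<in> kernel (Jac_grp H1 \<times>\<times> Jac_grp H2) (Jac_grp G) \<psi>"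
    using point_div_in_divs[OF v_in_H1] point_div_in_divs[OF swap.v_in_H1]
    by (auto simp: kernel_def carrier_Jac_grp one_Jac_grp \<psi>_jcls)
qed

text \<open>The inverse isomorphism is the degree of the first component, which is well defined
  on Jac(H1) because principal divisors have degree 0.\<close>

lemma kernel_Jac_glue_iso:
  "(Jac_grp H1 \<times>\<times> Jac_grp H2)\<lparr>carrier := kernel (Jac_grp H1 \<times>\<times> Jac_grp H2) (Jac_grp G) \<psi>\<rparr>
   \<cong> integer_group"
proof -
  have "deg H1 \<in> hom (Div_grp H1) integer_group"
    by (intro homI) (simp_all add: deg_add)
  then obtain d where d: "\<And>D. D \<in> divs H1 \<Longrightarrow> d (jcls H1 D) = deg H1 D"
    using Jac_grp_universal[OF wf_H1 group_integer_group] deg_prin[OF wf_H1] by (metis one_integer_group)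
  show ?thesis
  proof (rule iso_integer_group_range[OF kernel_Jac_glue, where g = "\<lambda>p. d (fst p)"])
    show "d (fst (jcls H1 (point_div v a), jcls H2 (point_div v (- a)))) = a" for a
      using d point_div_in_divs[OF v_in_H1] deg_point_div[OF _ v_in_H1] wf_H1
      by (simp add: wf_graph_def)
    show "(jcls H1 (point_div v a), jcls H2 (point_div v (- a))) \<otimes>\<^bsub>Jac_grp H1 \<times>\<times> Jac_grp H2\<^esub>
          (jcls H1 (point_div v b), jcls H2 (point_div v (- b))) =
          (jcls H1 (point_div v (a + b)), jcls H2 (point_div v (- (a + b))))" for a b
      using point_div_in_divs[OF v_in_H1] point_div_in_divs[OF swap.v_in_H1]
      by (simp add: mult_Jac_grp[OF wf_H1] mult_Jac_grp[OF swap.wf_H1] point_div_add add_ac)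
  qed
qed

end

lemma Jac_glue:
  "\<exists>\<psi> \<in> hom (Jac_grp H1 \<times>\<times> Jac_grp H2) (Jac_grp G).
     (\<forall>D1\<in>divs H1. \<forall>D2\<in>divs H2. \<psi> (jcls H1 D1, jcls H2 D2) = jcls G (glue H1 H2 (D1, D2))) \<and>
     \<psi> ` carrier (Jac_grp H1 \<times>\<times> Jac_grp H2) = carrier (Jac_grp G) \<and>
     (Jac_grp H1 \<times>\<times> Jac_grp H2)\<lparr>carrier := kernel (Jac_grp H1 \<times>\<times> Jac_grp H2) (Jac_grp G) \<psi>\<rparr>
       \<cong> integer_group"
proof -
  obtain \<phi>1 where \<phi>1: "\<phi>1 \<in> hom (Jac_grp H1) (Jac_grp G)" "\<And>D. D \<in> divs H1 \<Longrightarrow> \<phi>1 (jcls H1 D) = jcls G D"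
    using obtain_Jac_ext0 by blast
  obtain \<phi>2 where \<phi>2: "\<phi>2 \<in> hom (Jac_grp H2) (Jac_grp G)" "\<And>D. D \<in> divs H2 \<Longrightarrow> \<phi>2 (jcls H2 D) = jcls G D"
    using swap.obtain_Jac_ext0 by blast
  define \<psi> where "\<psi> = (\<lambda>(C1, C2). \<phi>1 C1 \<otimes>\<^bsub>Jac_grp G\<^esub> \<phi>2 C2)"
  have hom: "\<psi> \<in> hom (Jac_grp H1 \<times>\<times> Jac_grp H2) (Jac_grp G)"
    unfolding \<psi>_def by (rule comm_group.hom_DirProd_mult[OF comm_group_Jac_grp[OF wf_G] \<phi>1(1) \<phi>2(1)])
  have jcls: "\<psi> (jcls H1 D1, jcls H2 D2) = jcls G (D1 + D2)" if "D1 \<in> divs H1" "D2 \<in> divs H2" for D1 D2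
    using that divs_H1_subset swap.divs_H1_subset mult_Jac_grp[OF wf_G, of D1 D2]
    by (auto simp: \<psi>_def \<phi>1(2) \<phi>2(2))
  have "\<psi> ` carrier (Jac_grp H1 \<times>\<times> Jac_grp H2) = carrier (Jac_grp G)"
  proof
    show "carrier (Jac_grp G) \<subseteq> \<psi> ` carrier (Jac_grp H1 \<times>\<times> Jac_grp H2)"
      using divs_G_decompose by (force simp: carrier_Jac_grp carrier_Jac_DirProd jcls glue_eq_add)
  qed (use hom in \<open>auto simp: hom_def\<close>)
  then show ?thesis
    using hom jcls kernel_Jac_glue_iso[OF jcls] by (intro bexI[of _ \<psi>]) (auto simp: glue_eq_add)
qed

lemma v_in_G: "v \<in> gverts G"
  using v_in_H1 verts_union by auto

lemma linsys_H1_H2_add: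
  assumes "F1 \<in> linsys H1 X1" "F2 \<in> linsys H2 X2"
  shows "F1 + F2 \<in> linsys G (X1 + X2)"
proof -
  have eq: "F1 + F2 - (X1 + X2) = (F1 - X1) + (F2 - X2)"
    by (simp add: algebra_simps)
  have "F1 - X1 \<in> prin G" "F2 - X2 \<in> prin G"
    using assms prin_H1_subset swap.prin_H1_subset by (auto simp: linsys_def lin_equiv_def)
  then have "F1 + F2 - (X1 + X2) \<in> prin G"
    unfolding eq by (rule prin_add[OF wf_G])
  then show ?thesis
    using assms divs_H1_subset swap.divs_H1_subset
    by (auto simp: linsys_def lin_equiv_def effective_def intro: divs_add add_nonneg_nonneg)
qed

lemma rank_add_ge:
  assumes D1: "D1 \<in> divs H1" and D2: "D2 \<in> divs H2"
  shows "min (rank H1 D1) (rank H2 D2) \<le> rank G (D1 + D2)"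
proof (cases "min (rank H1 D1) (rank H2 D2) < 0")
  case True
  then show ?thesis using rank_ge_minus_1[of G "D1 + D2"] by linarith
next
  case False
  then obtain k where k: "min (rank H1 D1) (rank H2 D2) = int k"
    by (metis nonneg_int_cases not_less)
  have "linsys G (D1 + D2 - E) \<noteq> {}" if E: "E \<in> divs G" "effective E" "deg G E \<le> int k" for E
  proof -
    define E1 where "E1 = ext0 H1 E"
    define E2 where "E2 = E - E1"
    have E12: "E1 \<in> divs H1" "E2 \<in> divs H2" "E = E1 + E2"
      using divs_G_decompose[OF E(1)] glue_eq_add by (auto simp: E1_def E2_def)
    have eff: "effective E1" "effective E2"
      using E(2) by (auto simp: E1_def E2_def ext0_def effective_def)
    have "deg H1 E1 + deg H2 E2 \<le> int k"
      using E(3) E12 by (simp add: deg_add deg_H1 swap.deg_H1)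
    then have "deg H1 E1 \<le> int k" "deg H2 E2 \<le> int k"
      using deg_nonneg[OF eff(1), of H1] deg_nonneg[OF eff(2), of H2] by linarith+
    moreover have "int k \<le> rank H1 D1" "int k \<le> rank H2 D2"
      using k by linarith+
    ultimately obtain F1 F2 where "F1 \<in> linsys H1 (D1 - E1)" "F2 \<in> linsys H2 (D2 - E2)"
      using int_le_rank_iff[OF wf_H1 v_in_H1] int_le_rank_iff[OF swap.wf_H1 swap.v_in_H1] E12 eff
      by blast
    then have "F1 + F2 \<in> linsys G (D1 - E1 + (D2 - E2))"
      by (rule linsys_H1_H2_add)
    then show ?thesis
      by (auto simp: E12(3) algebra_simps)
  qed
  then show ?thesis
    using int_le_rank_iff[OF wf_G v_in_G] k by auto
qed

lemma rank_G_le_rank_H1: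
  assumes D: "D \<in> divs H1"
  shows "rank G D \<le> rank H1 D"
proof (cases "rank G D < 0")
  case True
  then show ?thesis using rank_ge_minus_1[of H1 D] by linarith
next
  case False
  then obtain k where k: "rank G D = int k"
    by (metis nonneg_int_cases not_less)
  have "linsys H1 (D - E) \<noteq> {}" if E: "E \<in> divs H1" "effective E" "deg H1 E \<le> int k" for E
  proof -
    have "E \<in> divs G" "deg G E \<le> int k"
      using E divs_H1_subset deg_H1 by auto
    then obtain F where F: "F \<in> linsys G (D - E)"
      using int_le_rank_iff[OF wf_G v_in_G, of k D] k E(2) by auto
    then have "collapse_to_H1 F - (D - E) \<in> prin H1"
      using D E(1) by (intro collapse_to_H1_diff_prin) (auto simp: linsys_def lin_equiv_def divs_diff)
    then have "collapse_to_H1 F \<in> linsys H1 (D - E)"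
      using F by (auto simp: linsys_def lin_equiv_def collapse_to_H1_in_divs collapse_to_H1_effective)
    then show ?thesis by blast
  qed
  then show ?thesis
    using int_le_rank_iff[OF wf_H1 v_in_H1] k by auto
qed

end

theorem lemma2p5:
  fixes G H1 H2 :: "('v, 'e) mgraph" and v :: 'v
  assumes conn: "connected_graph G"
    and cut: "cut_vertex G v"
    and dec: "wedge_decomp G v H1 H2"
  shows
    \<comment> \<open>(1)\<close>
    "(glue H1 H2 \<in> hom (Div_grp H1 \<times>\<times> Div_grp H2) (Div_grp G) \<and>
      glue H1 H2 ` carrier (Div_grp H1 \<times>\<times> Div_grp H2) = carrier (Div_grp G) \<and>
      (Div_grp H1 \<times>\<times> Div_grp H2)
        \<lparr>carrier := kernel (Div_grp H1 \<times>\<times> Div_grp H2) (Div_grp G) (glue H1 H2)\<rparr>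
        \<cong> integer_group \<and>
      glue H1 H2 \<in> iso (Prin_grp H1 \<times>\<times> Prin_grp H2) (Prin_grp G) \<and>
      (\<exists>\<psi> \<in> hom (Jac_grp H1 \<times>\<times> Jac_grp H2) (Jac_grp G).
         (\<forall>D1\<in>divs H1. \<forall>D2\<in>divs H2.
            \<psi> (jcls H1 D1, jcls H2 D2) = jcls G (glue H1 H2 (D1, D2))) \<and>
         \<psi> ` carrier (Jac_grp H1 \<times>\<times> Jac_grp H2) = carrier (Jac_grp G) \<and>
         (Jac_grp H1 \<times>\<times> Jac_grp H2)
           \<lparr>carrier := kernel (Jac_grp H1 \<times>\<times> Jac_grp H2) (Jac_grp G) \<psi>\<rparr>
           \<cong> integer_group))
     \<and>
     \<comment> \<open>(2)\<close>
     (\<forall>H\<in>{H1, H2}.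
        ext0 H \<in> hom (Div_grp H) (Div_grp G) \<and> inj_on (ext0 H) (divs H) \<and>
        ext0 H \<in> hom (Prin_grp H) (Prin_grp G) \<and> inj_on (ext0 H) (prin H) \<and>
        (\<exists>\<phi> \<in> hom (Jac_grp H) (Jac_grp G).
           (\<forall>D\<in>divs H. \<phi> (jcls H D) = jcls G (ext0 H D)) \<and>
           inj_on \<phi> (carrier (Jac_grp H))))
     \<and>
     \<comment> \<open>(3)\<close>
     (\<forall>D1\<in>divs H1. \<forall>D2\<in>divs H2.
        rank G (glue H1 H2 (D1, D2)) \<ge> min (rank H1 D1) (rank H2 D2))
     \<and>
     \<comment> \<open>(4)\<close>
     (\<forall>H\<in>{H1, H2}. \<forall>D\<in>divs H. rank H D \<ge> rank G (ext0 H D))"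
proof -
  interpret wedge G v H1 H2
    using conn dec by (simp add: wedge_def connected_graph_def)
  show ?thesis
    using glue_hom glue_image kernel_glue_iso glue_iso_Prin Jac_glue
      ext0_H1_properties swap.ext0_H1_properties
      rank_add_ge rank_G_le_rank_H1 swap.rank_G_le_rank_H1
    by (auto simp: glue_eq_add ext0_eq_self)
qed

end
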